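(* Assume the standing assumptions below. Let $\mathcal P$ be a (random) collection of pairwise disjoint subsets $\mathcal R\subseteq\mathbb{R}^d$ with $\bigsqcup_{\mathcal R\in\mathcal P}\mathcal R=\hat C^{\mathrm{gwc}}(X^{n+1})$ almost surely. For each $\mathcal R\in\mathcal P$ let $\hat C^{\mathrm{lwc}}(X^{n+1};\mathcal R)\subseteq\mathbb{R}^d$ be a (random) set such that, almost surely, $\hat C^{\mathrm{lwc}}(X^{n+1};\mathcal R)\subseteq\mathcal R$, and, on the event $Y^{n+1}\in\mathcal R$, $\hat C^{\mathrm{lwc}}(X^{n+1};\mathcal R)\supseteq\tilde C(X^{n+1})\cap\mathcal R$. Let $\mathcal U:=\bigsqcup_{\mathcal R\in\mathcal P}\hat C^{\mathrm{lwc}}(X^{n+1};\mathcal R)$. Then $\mathcal U\subseteq\hat C^{\mathrm{gwc}}(X^{n+1})$ almost surely and $\mathbb{P}[Y^{n+1}\in\mathcal U]\ge1-\alpha$. Consequently any (random) set $\hat C^{\mathrm{lwc}}(X^{n+1})$ with $\mathcal U\subseteq\hat C^{\mathrm{lwc}}(X^{n+1})\subseteq \hat C^{\mathrm{gwc}}(X^{n+1})$ a.s. (e.g. a rectangular enclosure of $\mathcal U$ not extending beyond $\hat C^{\mathrm{gwc}}(X^{n+1})$) satisfies $\mathbb{P}[Y^{n+1}\in\hat C^{\mathrm{lwc}}(X^{n+1})]\ge1-\alpha$.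
   Context: Setting: $n\ge2$, $d\ge1$, $\alpha\in(0,1)$. $(X^i,Y^i)$, $i\in[n+1]$, random with $X^i\in\mathcal X$, $Y^i\in\mathbb{R}^d$; $E:\mathcal X\times\mathbb{R}^d\to\mathbb{R}^d$ a fixed residual function, $E^i:=E(X^i,Y^i)$; $(E^1,\dots,E^{n+1})$ exchangeable. Assumption A: for each $j$, the distribution of $E^i_j$ has no point masses, $E^i_j\ge0$ a.s., finite mean, $0<\mathrm{Var}(E^i_j)<\infty$, and $E^1_j,\dots,E^{n+1}_j$ a.s. pairwise distinct. $\hat Q_{1-\alpha}(x_1,\dots,x_n)$: the $\lceil(1-\alpha)(n+1)\rceil$-th smallest value of $\{x_1,\dots,x_n,+\infty\}$. $\hat\mu_j=\frac1n\sum_{i=1}^nE^i_j$, $\hat\sigma_j=\sqrt{\frac1n\sum_{i=1}^n(E^i_j-\hat\mu_j)^2}$; for $z\ge0$, $\hat\mu_j(z)=\frac{\sum_{i=1}^nE^i_j+z}{n+1}$, $\hat\sigma_j(z)=\sqrt{\frac{\sum_{i=1}^n(E^i_j-\hat\mu_j(z))^2+(z-\hat\mu_j(z))^2}{n}}$. Link functions: $\omega_j(c)=0$ if $c\le-\frac n{\sqrt{n+1}}$; $\max\{0,\hat\mu_j-\hat\sigma_j|c|\sqrt{\tfrac{(n+1)^2}{n^2-(n+1)c^2}}\}$ if $-\frac n{\sqrt{n+1}}<c<0$; $\hat\mu_j+\hat\sigma_j|c|\sqrt{\tfrac{(n+1)^2}{n^2-(n+1)c^2}}$ if $0\le c<\frac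 n{\sqrt{n+1}}$; $+\infty$ if $c\ge\frac n{\sqrt{n+1}}$. Oracle: $\hat\mu^{\mathrm{oracle}}_j=\hat\mu_j(E^{n+1}_j)$, $\hat\sigma^{\mathrm{oracle}}_j=\hat\sigma_j(E^{n+1}_j)$, $\Phi(t;\mu,\sigma)=\max_j\frac{t_j-\mu_j}{\sigma_j}$, $S^i_{\mathrm{oracle}}=\Phi(E^i;\hat\mu^{\mathrm{oracle}},\hat\sigma^{\mathrm{oracle}})$, $\hat Q^{\mathrm{oracle}}_{1-\alpha}=\hat Q_{1-\alpha}(S^1_{\mathrm{oracle}},\dots,S^n_{\mathrm{oracle}})$, and $\tilde C(X^{n+1}):=\{y:0\le E_j(X^{n+1},y)\le\omega_j(\hat Q^{\mathrm{oracle}}_{1-\alpha})\ \forall j\}$ (a random set depending on the unobserved $Y^{n+1}$). GWC: $\hat\Phi^{\mathrm{gwc}}(t)=\max_j\sup_{z_j\ge0}\frac{t_j-\hat\mu_j(z_j)}{\hat\sigma_j(z_j)}$, $\hat Q^{\mathrm{gwc}}_{1-\alpha}=\hat Q_{1-\alpha}(\hat\Phi^{\mathrm{gwc}}(E^1),\dots,\hat\Phi^{\mathrm{gwc}}(E^n))$, $\hat C^{\mathrm{gwc}}(X^{n+1})=\{y:0\le E_j(X^{n+1},y)\le\omega_j(\hat Q^{\mathrm{gwc}}_{1-\alpha})\ \forall j\}$. *)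

theory Defs
  imports "HOL-Probability.Probability"
begin

text \<open>Vectors in R^d are rendered as real^'d (finite index type 'd, so d >= 1).
Sample indices are the naturals 1..n+1; index n+1 is the test point.
A sample of residuals is a map e :: nat => real^'d (only e 1 .. e (n+1) matter).\<close>

definition Qhat :: "real \<Rightarrow> nat \<Rightarrow> (nat \<Rightarrow> ereal) \<Rightarrow> ereal" where
  "Qhat \<alpha> n s =
     sort (map s [1..<n+1] @ [\<infinity>]) ! (nat \<lceil>(1 - \<alpha>) * real (n + 1)\<rceil> - 1)"

definition mu_hat :: "nat \<Rightarrow> (nat \<Rightarrow> real^'d) \<Rightarrow> 'd \<Rightarrow> real" where
  "mu_hat n e j = (\<Sum>i=1..n. e i $ j) / real n"

definition sigma_hat :: "nat \<Rightarrow> (nat \<Rightarrow> real^'d) \<Rightarrow> 'd \<Rightarrow> real" where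
  "sigma_hat n e j = sqrt ((\<Sum>i=1..n. (e i $ j - mu_hat n e j)^2) / real n)"

definition mu_z :: "nat \<Rightarrow> (nat \<Rightarrow> real^'d) \<Rightarrow> 'd \<Rightarrow> real \<Rightarrow> real" where
  "mu_z n e j z = ((\<Sum>i=1..n. e i $ j) + z) / real (n + 1)"

definition sigma_z :: "nat \<Rightarrow> (nat \<Rightarrow> real^'d) \<Rightarrow> 'd \<Rightarrow> real \<Rightarrow> real" where
  "sigma_z n e j z = sqrt (((\<Sum>i=1..n. (e i $ j - mu_z n e j z)^2) + (z - mu_z n e j z)^2) / real n)"

definition omega :: "nat \<Rightarrow> (nat \<Rightarrow> real^'d) \<Rightarrow> 'd \<Rightarrow> ereal \<Rightarrow> ereal" where
  "omega n e j c =
     (let b = real n / sqrt (real n + 1) in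
      if c \<le> ereal (- b) then 0
      else if c \<ge> ereal b then \<infinity>
      else (let r = real_of_ereal c;
                w = sigma_hat n e j * \<bar>r\<bar> *
                    sqrt ((real n + 1)^2 / ((real n)^2 - (real n + 1) * r^2))
            in if r < 0 then ereal (max 0 (mu_hat n e j - w))
               else ereal (mu_hat n e j + w)))"

definition region :: "('x \<Rightarrow> real^'d \<Rightarrow> real^'d) \<Rightarrow> 'x \<Rightarrow> nat \<Rightarrow> (nat \<Rightarrow> real^'d)
    \<Rightarrow> ereal \<Rightarrow> (real^'d) set" where
  "region E x n e q = {y. \<forall>j. 0 \<le> E x y $ j \<and> ereal (E x y $ j) \<le> omega n e j q}"

definition S_oracle :: "nat \<Rightarrow> (nat \<Rightarrow> real^'d) \<Rightarrow> real^'d \<Rightarrow> real" where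
  "S_oracle n e t = Max (range (\<lambda>j. (t $ j - mu_z n e j (e (n+1) $ j)) / sigma_z n e j (e (n+1) $ j)))"

definition Q_oracle :: "real \<Rightarrow> nat \<Rightarrow> (nat \<Rightarrow> real^'d) \<Rightarrow> ereal" where
  "Q_oracle \<alpha> n e = Qhat \<alpha> n (\<lambda>i. ereal (S_oracle n e (e i)))"

definition Phi_gwc :: "nat \<Rightarrow> (nat \<Rightarrow> real^'d) \<Rightarrow> real^'d \<Rightarrow> ereal" where
  "Phi_gwc n e t = (SUP j. SUP z\<in>{0::real..}. ereal ((t $ j - mu_z n e j z) / sigma_z n e j z))"

definition Q_gwc :: "real \<Rightarrow> nat \<Rightarrow> (nat \<Rightarrow> real^'d) \<Rightarrow> ereal" where
  "Q_gwc \<alpha> n e = Qhat \<alpha> n (\<lambda>i. Phi_gwc n e (e i))"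

definition resid :: "('x \<Rightarrow> real^'d \<Rightarrow> real^'d) \<Rightarrow> (nat \<Rightarrow> 'w \<Rightarrow> 'x) \<Rightarrow> (nat \<Rightarrow> 'w \<Rightarrow> real^'d)
    \<Rightarrow> nat \<Rightarrow> 'w \<Rightarrow> real^'d" where
  "resid E X Y i \<omega> = E (X i \<omega>) (Y i \<omega>)"

definition C_tilde :: "real \<Rightarrow> nat \<Rightarrow> ('x \<Rightarrow> real^'d \<Rightarrow> real^'d) \<Rightarrow> (nat \<Rightarrow> 'w \<Rightarrow> 'x)
    \<Rightarrow> (nat \<Rightarrow> 'w \<Rightarrow> real^'d) \<Rightarrow> 'w \<Rightarrow> (real^'d) set" where
  "C_tilde \<alpha> n E X Y \<omega> =
     region E (X (n+1) \<omega>) n (\<lambda>i. resid E X Y i \<omega>) (Q_oracle \<alpha> n (\<lambda>i. resid E X Y i \<omega>))"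

definition C_gwc :: "real \<Rightarrow> nat \<Rightarrow> ('x \<Rightarrow> real^'d \<Rightarrow> real^'d) \<Rightarrow> (nat \<Rightarrow> 'w \<Rightarrow> 'x)
    \<Rightarrow> (nat \<Rightarrow> 'w \<Rightarrow> real^'d) \<Rightarrow> 'w \<Rightarrow> (real^'d) set" where
  "C_gwc \<alpha> n E X Y \<omega> =
     region E (X (n+1) \<omega>) n (\<lambda>i. resid E X Y i \<omega>) (Q_gwc \<alpha> n (\<lambda>i. resid E X Y i \<omega>))"

definition exchangeable :: "'w measure \<Rightarrow> nat \<Rightarrow> (nat \<Rightarrow> 'w \<Rightarrow> 'v::topological_space) \<Rightarrow> bool" where
  "exchangeable M m V \<longleftrightarrow>
     (\<forall>\<pi>. \<pi> permutes {1..m} \<longrightarrow>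
        distr M (PiM {1..m} (\<lambda>_. borel)) (\<lambda>\<omega>. \<lambda>i\<in>{1..m}. V (\<pi> i) \<omega>) =
        distr M (PiM {1..m} (\<lambda>_. borel)) (\<lambda>\<omega>. \<lambda>i\<in>{1..m}. V i \<omega>))"

definition assumption_A :: "'w measure \<Rightarrow> nat \<Rightarrow> (nat \<Rightarrow> 'w \<Rightarrow> real^'d) \<Rightarrow> bool" where
  "assumption_A M n V \<longleftrightarrow>
     (\<forall>j. \<forall>i\<in>{1..n+1}.
        (\<forall>c. measure M {\<omega>\<in>space M. V i \<omega> $ j = c} = 0) \<and>
        (AE \<omega> in M. V i \<omega> $ j \<ge> 0) \<and>
        integrable M (\<lambda>\<omega>. V i \<omega> $ j) \<and>
        integrable M (\<lambda>\<omega>. (V i \<omega> $ j)^2) \<and>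
        prob_space.variance M (\<lambda>\<omega>. V i \<omega> $ j) > 0) \<and>
     (\<forall>j. AE \<omega> in M. \<forall>i\<in>{1..n+1}. \<forall>k\<in>{1..n+1}. i \<noteq> k \<longrightarrow> V i \<omega> $ j \<noteq> V k \<omega> $ j)"

end

theory Submission
  imports Defs
begin

(*
  Write u = E^{n+1}_j - mu_hat_j. The leave-in standardised residual
  (E^{n+1}_j - mu_j(E^{n+1}_j)) / sigma_j(E^{n+1}_j) equals
  n / sqrt (n+1) * u / sqrt ((n+1) sigma_hat_j^2 + u^2), a strictly increasing function of u
  whose inverse is the link function omega_j. Hence an oracle score of the test point below a
  threshold q puts E^{n+1} into the region cut out by omega_j(q).

  The oracle score is a symmetric function of the augmented sample E^1, ..., E^{n+1}, so by
  exchangeability the test point has fewer than k = ceil ((1 - alpha)(n+1)) strictly smaller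
  scores with probability at least k / (n+1) >= 1 - alpha. On that event its score is below
  both the oracle and the GWC quantile (the GWC score dominates the oracle score because
  E^{n+1} >= 0), so Y^{n+1} lies in the oracle set and in the GWC set. The parts cover the GWC
  set, so Y^{n+1} lies in some part R, and then in C^lwc(R), which contains the oracle set
  restricted to R.
*)

section \<open>The link function inverts the standardised score\<close>

definition alg_sigmoid :: "real \<Rightarrow> real \<Rightarrow> real" where
  "alg_sigmoid a u = u / sqrt (a\<^sup>2 + u\<^sup>2)"

lemma alg_sigmoid_minus: "alg_sigmoid a (- u) = - alg_sigmoid a u"
  by (simp add: alg_sigmoid_def)

lemma alg_sigmoid_less_of_nonneg:
  assumes "a \<noteq> 0" "0 \<le> u" "u < v"
  shows "alg_sigmoid a u < alg_sigmoid a v"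
proof -
  have "u\<^sup>2 * (a\<^sup>2 + v\<^sup>2) < v\<^sup>2 * (a\<^sup>2 + u\<^sup>2)"
    using assms by (simp add: algebra_simps power_strict_mono)
  then have "sqrt (u\<^sup>2 * (a\<^sup>2 + v\<^sup>2)) < sqrt (v\<^sup>2 * (a\<^sup>2 + u\<^sup>2))"
    by (rule real_sqrt_less_mono)
  then have "u * sqrt (a\<^sup>2 + v\<^sup>2) < v * sqrt (a\<^sup>2 + u\<^sup>2)"
    using assms by (simp add: real_sqrt_mult)
  moreover have "0 < a\<^sup>2 + u\<^sup>2" "0 < a\<^sup>2 + v\<^sup>2"
    using assms by (simp_all add: add_pos_nonneg)
  ultimately show ?thesis
    by (simp add: alg_sigmoid_def divide_less_eq pos_less_divide_eq)
qed

lemma strict_mono_alg_sigmoid: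
  assumes "a \<noteq> 0"
  shows "strict_mono (alg_sigmoid a)"
proof (rule strict_monoI)
  fix u v :: real assume "u < v"
  consider "0 \<le> u" | "v \<le> 0" | "u < 0" "0 < v" by linarith
  then show "alg_sigmoid a u < alg_sigmoid a v"
  proof cases
    case 1
    then show ?thesis
      using alg_sigmoid_less_of_nonneg[OF assms] \<open>u < v\<close> by blast
  next
    case 2
    then have "alg_sigmoid a (- v) < alg_sigmoid a (- u)"
      using alg_sigmoid_less_of_nonneg[OF assms] \<open>u < v\<close> by simp
    then show ?thesis
      by (simp add: alg_sigmoid_minus)
  next
    case 3
    have "0 < sqrt (a\<^sup>2 + u\<^sup>2)" "0 < sqrt (a\<^sup>2 + v\<^sup>2)"
      using assms by (simp_all add: add_pos_nonneg)
    then have "u / sqrt (a\<^sup>2 + u\<^sup>2) < 0" "0 < v / sqrt (a\<^sup>2 + v\<^sup>2)"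
      using 3 by (simp_all add: divide_neg_pos)
    then show ?thesis
      by (simp add: alg_sigmoid_def)
  qed
qed

lemma abs_alg_sigmoid_less_1:
  assumes "a \<noteq> 0"
  shows "\<bar>alg_sigmoid a u\<bar> < 1"
proof -
  have "u\<^sup>2 < a\<^sup>2 + u\<^sup>2"
    using assms by simp
  then have "sqrt (u\<^sup>2) < sqrt (a\<^sup>2 + u\<^sup>2)"
    by (rule real_sqrt_less_mono)
  then have "\<bar>u\<bar> < sqrt (a\<^sup>2 + u\<^sup>2)"
    by simp
  moreover have "0 < sqrt (a\<^sup>2 + u\<^sup>2)"
    using assms by (simp add: add_pos_nonneg)
  ultimately show ?thesis
    unfolding alg_sigmoid_def by (metis abs_divide abs_of_pos divide_less_eq_1_pos)
qed

lemma alg_sigmoid_inverse: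
  assumes "0 < a" "\<bar>t\<bar> < 1"
  shows "alg_sigmoid a (a * t / sqrt (1 - t\<^sup>2)) = t"
proof -
  have t2: "0 < 1 - t\<^sup>2"
    using assms(2) by (simp add: abs_square_less_1)
  have "a\<^sup>2 + (a * t / sqrt (1 - t\<^sup>2))\<^sup>2 = (a / sqrt (1 - t\<^sup>2))\<^sup>2"
    using t2 by (simp add: power_divide power_mult_distrib field_simps)
  then have "sqrt (a\<^sup>2 + (a * t / sqrt (1 - t\<^sup>2))\<^sup>2) = a / sqrt (1 - t\<^sup>2)"
    using assms(1) t2 by simp
  then show ?thesis
    using assms(1) t2 by (simp add: alg_sigmoid_def)
qed

lemma le_of_alg_sigmoid_le:
  assumes "0 < a" "\<bar>t\<bar> < 1" "alg_sigmoid a u \<le> t"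
  shows "u \<le> a * t / sqrt (1 - t\<^sup>2)"
  using assms strict_mono_less_eq[OF strict_mono_alg_sigmoid, of a u "a * t / sqrt (1 - t\<^sup>2)"]
  by (simp add: alg_sigmoid_inverse)

lemma sum_power2_diff_shift:
  fixes a :: "'i \<Rightarrow> real" and mean :: real
  assumes "finite I" "I \<noteq> {}"
  defines "mean \<equiv> sum a I / card I"
  shows "(\<Sum>i\<in>I. (a i - m)\<^sup>2) = (\<Sum>i\<in>I. (a i - mean)\<^sup>2) + card I * (mean - m)\<^sup>2"
proof -
  have centred: "(\<Sum>i\<in>I. a i - mean) = 0"
    using assms by (simp add: sum_subtractf)
  have "(\<Sum>i\<in>I. (a i - m)\<^sup>2) = (\<Sum>i\<in>I. (a i - mean)\<^sup>2 + 2 * (mean - m) * (a i - mean) + (mean - m)\<^sup>2)"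
    by (rule sum.cong) (auto simp: power2_eq_square algebra_simps)
  also have "\<dots> = (\<Sum>i\<in>I. (a i - mean)\<^sup>2) + 2 * (mean - m) * (\<Sum>i\<in>I. a i - mean) + card I * (mean - m)\<^sup>2"
    by (simp add: sum.distrib sum_distrib_left)
  finally show ?thesis
    using centred by simp
qed

lemma diff_mu_z:
  assumes "n \<ge> 1"
  shows "z - mu_z n e j z = real n * (z - mu_hat n e j) / (real n + 1)"
proof -
  define A where "A = (\<Sum>i=1..n. e i $ j)"
  have "real n * (z - mu_hat n e j) = real n * z - A"
    using assms by (simp add: mu_hat_def A_def right_diff_distrib)
  moreover have "z - mu_z n e j z = (real n * z - A) / (real n + 1)"
    by (simp add: mu_z_def A_def field_simps)
  ultimately show ?thesis
    by simp
qed

lemma mu_hat_diff_mu_z: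
  assumes "n \<ge> 1"
  shows "mu_hat n e j - mu_z n e j z = - (z - mu_hat n e j) / (real n + 1)"
proof -
  have "mu_hat n e j - mu_z n e j z = (z - mu_z n e j z) - (z - mu_hat n e j)"
    by simp
  also have "\<dots> = - (z - mu_hat n e j) / (real n + 1)"
    using assms by (simp add: diff_mu_z field_simps)
  finally show ?thesis .
qed

lemma sigma_z_eq:
  assumes n: "n \<ge> 1"
  shows "sigma_z n e j z = sqrt ((sigma_hat n e j)\<^sup>2 + (z - mu_hat n e j)\<^sup>2 / (real n + 1))"
proof -
  define u where "u = z - mu_hat n e j"
  have "(\<Sum>i=1..n. (e i $ j - mu_z n e j z)\<^sup>2)
      = (\<Sum>i=1..n. (e i $ j - mu_hat n e j)\<^sup>2) + real n * (mu_hat n e j - mu_z n e j z)\<^sup>2"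
    using sum_power2_diff_shift[of "{1..n}" "\<lambda>i. e i $ j" "mu_z n e j z"] n
    by (simp add: mu_hat_def)
  also have "(\<Sum>i=1..n. (e i $ j - mu_hat n e j)\<^sup>2) = real n * (sigma_hat n e j)\<^sup>2"
    using n by (simp add: sigma_hat_def sum_nonneg)
  also have "(mu_hat n e j - mu_z n e j z)\<^sup>2 = (u / (real n + 1))\<^sup>2"
    unfolding mu_hat_diff_mu_z[OF n] u_def[symmetric] by (simp add: power_divide)
  finally have "(\<Sum>i=1..n. (e i $ j - mu_z n e j z)\<^sup>2) + (z - mu_z n e j z)\<^sup>2
      = real n * (sigma_hat n e j)\<^sup>2 + (real n * (u / (real n + 1))\<^sup>2 + (real n * u / (real n + 1))\<^sup>2)"
    unfolding diff_mu_z[OF n] by (simp add: u_def)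
  also have "real n * (u / (real n + 1))\<^sup>2 + (real n * u / (real n + 1))\<^sup>2
      = real n * u\<^sup>2 * (real n + 1) / (real n + 1)\<^sup>2"
    by (simp add: power_divide power_mult_distrib add_divide_distrib power2_eq_square algebra_simps)
  also have "\<dots> = real n * u\<^sup>2 / (real n + 1)"
    by (simp add: power2_eq_square)
  finally have "sigma_z n e j z
      = sqrt ((real n * (sigma_hat n e j)\<^sup>2 + real n * u\<^sup>2 / (real n + 1)) / real n)"
    by (simp only: sigma_z_def)
  then show ?thesis
    using n by (simp add: u_def add_divide_distrib)
qed

lemma score_z_eq_alg_sigmoid:
  assumes "n \<ge> 1"
  shows "(z - mu_z n e j z) / sigma_z n e j z
    = real n / sqrt (real n + 1) * alg_sigmoid (sqrt (real n + 1) * sigma_hat n e j) (z - mu_hat n e j)"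
proof -
  define u where "u = z - mu_hat n e j"
  define a where "a = sqrt (real n + 1) * sigma_hat n e j"
  have "sigma_z n e j z = sqrt (a\<^sup>2 + u\<^sup>2) / sqrt (real n + 1)"
    using assms by (simp add: sigma_z_eq a_def u_def power_mult_distrib
        real_sqrt_divide[symmetric] add_divide_distrib)
  then have "(z - mu_z n e j z) / sigma_z n e j z
      = real n * sqrt (real n + 1) / (real n + 1) * alg_sigmoid a u"
    using assms by (simp add: diff_mu_z alg_sigmoid_def u_def[symmetric])
  also have "real n * sqrt (real n + 1) / (real n + 1) = real n / sqrt (real n + 1)"
  proof -
    have "sqrt (real n + 1) * sqrt (real n + 1) = real n + 1"
      by simp
    then show ?thesis
      by (simp add: field_simps)
  qed
  finally show ?thesis
    by (simp add: a_def u_def)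
qed

lemma le_omega_ereal:
  assumes n: "n \<ge> 1" and r: "\<bar>r\<bar> < real n / sqrt (real n + 1)"
  defines "t \<equiv> r * sqrt (real n + 1) / real n"
  shows "ereal (mu_hat n e j + sqrt (real n + 1) * sigma_hat n e j * t / sqrt (1 - t\<^sup>2))
    \<le> omega n e j (ereal r)"
proof -
  define D where "D = (real n)\<^sup>2 - (real n + 1) * r\<^sup>2"
  define w where "w = sigma_hat n e j * \<bar>r\<bar> * sqrt ((real n + 1)\<^sup>2 / D)"
  have "\<bar>r\<bar> * sqrt (real n + 1) < real n"
    using r by (simp add: less_divide_eq)
  then have "(\<bar>r\<bar> * sqrt (real n + 1))\<^sup>2 < (real n)\<^sup>2"
    by (rule power_strict_mono) auto
  then have "r\<^sup>2 * (real n + 1) < (real n)\<^sup>2"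
    by (simp add: power_mult_distrib)
  then have D: "0 < D"
    unfolding D_def by (simp add: algebra_simps)
  have "1 - t\<^sup>2 = D / (real n)\<^sup>2"
    using n by (simp add: t_def D_def power_divide power_mult_distrib field_simps)
  then have "sqrt (1 - t\<^sup>2) = sqrt D / real n"
    by (simp add: real_sqrt_divide)
  moreover have "sqrt ((real n + 1)\<^sup>2 / D) = sqrt (real n + 1) * sqrt (real n + 1) / sqrt D"
    by (simp add: real_sqrt_divide)
  ultimately have "sqrt (real n + 1) * sigma_hat n e j * t / sqrt (1 - t\<^sup>2)
      = (if r < 0 then - w else w)"
    using n by (simp add: w_def t_def abs_if)
  moreover have "omega n e j (ereal r)
      = (if r < 0 then ereal (max 0 (mu_hat n e j - w)) else ereal (mu_hat n e j + w))"
    using r by (simp add: omega_def Let_def w_def D_def abs_less_iff)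
  ultimately show ?thesis
    by simp
qed

lemma omega_eq_top:
  assumes "ereal (- (real n / sqrt (real n + 1))) < c" "ereal (real n / sqrt (real n + 1)) \<le> c"
  shows "omega n e j c = \<infinity>"
  using assms by (simp add: omega_def Let_def)

lemma le_omega_ereal_of_score_le:
  assumes n: "n \<ge> 1" and s: "sigma_hat n e j > 0" and r: "\<bar>r\<bar> < real n / sqrt (real n + 1)"
    and score: "real n / sqrt (real n + 1)
      * alg_sigmoid (sqrt (real n + 1) * sigma_hat n e j) (z - mu_hat n e j) \<le> r"
  shows "ereal z \<le> omega n e j (ereal r)"
proof -
  define b where "b = real n / sqrt (real n + 1)"
  define a where "a = sqrt (real n + 1) * sigma_hat n e j"
  define t where "t = r * sqrt (real n + 1) / real n"
  have b: "0 < b" and a: "0 < a"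
    using n s by (simp_all add: b_def a_def)
  have t: "t = r / b"
    using n by (simp add: t_def b_def)
  have t1: "\<bar>t\<bar> < 1"
    using b r by (simp add: t b_def[symmetric] abs_divide abs_of_pos divide_less_eq_1_pos)
  have "alg_sigmoid a (z - mu_hat n e j) \<le> t"
    using score b by (simp add: t a_def b_def[symmetric] pos_le_divide_eq mult.commute[of b])
  then have "z - mu_hat n e j \<le> a * t / sqrt (1 - t\<^sup>2)"
    by (rule le_of_alg_sigmoid_le[OF a t1])
  then have "ereal z \<le> ereal (mu_hat n e j + a * t / sqrt (1 - t\<^sup>2))"
    by simp
  also have "\<dots> \<le> omega n e j (ereal r)"
    using le_omega_ereal[OF n r] unfolding a_def t_def by (simp add: mult.assoc)
  finally show ?thesis .
qed

lemma le_omega_of_score_le: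
  assumes n: "n \<ge> 1" and s: "sigma_hat n e j > 0"
    and score: "ereal ((z - mu_z n e j z) / sigma_z n e j z) \<le> q"
  shows "ereal z \<le> omega n e j q"
proof -
  define b where "b = real n / sqrt (real n + 1)"
  define g where "g = alg_sigmoid (sqrt (real n + 1) * sigma_hat n e j) (z - mu_hat n e j)"
  have b: "0 < b"
    using n by (simp add: b_def)
  have g: "\<bar>g\<bar> < 1"
    using n s by (simp add: g_def abs_alg_sigmoid_less_1)
  have bg: "ereal (b * g) \<le> q"
    using score by (simp only: score_z_eq_alg_sigmoid[OF n] b_def g_def)
  have "- b < b * g"
    using b g mult_strict_left_mono[of "-1" g b] by (simp add: abs_less_iff)
  then have "ereal (- b) < ereal (b * g)"
    by simp
  then have q_gt: "ereal (- b) < q"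
    using bg by (rule less_le_trans)
  show ?thesis
  proof (cases "ereal b \<le> q")
    case True
    have "omega n e j q = \<infinity>"
      using omega_eq_top[OF q_gt[unfolded b_def] True[unfolded b_def]] .
    then show ?thesis
      by simp
  next
    case False
    with q_gt obtain r where q: "q = ereal r" and r: "\<bar>r\<bar> < b"
      by (cases q) auto
    have "b * g \<le> r"
      using bg by (simp add: q)
    with le_omega_ereal_of_score_le[OF n s] r show ?thesis
      unfolding q b_def g_def by blast
  qed
qed

section \<open>Empirical quantiles, ranks and the oracle score\<close>

lemma le_sort_nth_of_length_filter_less:
  fixes xs :: "'a::linorder list"
  assumes k: "k < length xs" and few: "length (filter (\<lambda>y. y < x) xs) \<le> k"
  shows "x \<le> sort xs ! k"
proof (rule ccontr)
  assume "\<not> x \<le> sort xs ! k"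
  then have below: "y < x" if "y \<in> set (take (Suc k) (sort xs))" for y
  proof -
    from that obtain i where "i < Suc k" "y = sort xs ! i"
      using k by (auto simp: in_set_conv_nth)
    then have "y \<le> sort xs ! k"
      using k by (simp add: sorted_nth_mono)
    then show "y < x"
      using \<open>\<not> x \<le> sort xs ! k\<close> by simp
  qed
  have "Suc k = length (filter (\<lambda>y. y < x) (take (Suc k) (sort xs)))"
    using k below by (simp add: filter_True min_def)
  also have "\<dots> \<le> length (filter (\<lambda>y. y < x) (sort xs))"
    by (metis append_take_drop_id filter_append length_append le_add1)
  also have "\<dots> = length (filter (\<lambda>y. y < x) xs)"
    by (metis mset_filter mset_sort size_mset)
  finally show False
    using few by simp
qed

lemma le_Qhat_of_card_less:
  assumes k: "nat \<lceil>(1 - \<alpha>) * real (n + 1)\<rceil> = k" "1 \<le> k" "k \<le> n + 1"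
    and few: "card {i\<in>{1..n}. t i < x} < k"
  shows "x \<le> Qhat \<alpha> n t"
proof -
  define xs where "xs = map t [1..<n+1] @ [\<infinity>]"
  have "length (filter (\<lambda>y. y < x) xs) = card ({i. t i < x} \<inter> set [1..<n+1])"
    by (simp add: xs_def filter_map o_def distinct_length_filter)
  also have "{i. t i < x} \<inter> set [1..<n+1] = {i\<in>{1..n}. t i < x}"
    by auto
  finally have "length (filter (\<lambda>y. y < x) xs) \<le> k - 1"
    using few by simp
  moreover have "k - 1 < length xs"
    using k(2,3) by (simp add: xs_def del: upt_Suc)
  ultimately have "x \<le> sort xs ! (k - 1)"
    by (intro le_sort_nth_of_length_filter_less)
  then show ?thesis
    unfolding Qhat_def k(1) xs_def .
qed

lemma card_rank_less_ge:
  fixes s :: "'i \<Rightarrow> 'a::linorder"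
  assumes fin: "finite I" and k: "k \<le> card I"
  shows "k \<le> card {i\<in>I. card {l\<in>I. s l < s i} < k}"
proof (rule ccontr)
  define A where "A = {i\<in>I. card {l\<in>I. s l < s i} < k}"
  assume "\<not> k \<le> card A"
  then have cA: "card A < k"
    by simp
  have AI: "A \<subseteq> I"
    unfolding A_def by auto
  then have "I - A \<noteq> {}"
    using cA k by auto
  then have "Min (s ` (I - A)) \<in> s ` (I - A)"
    using fin by (intro Min_in) auto
  then obtain i where i: "i \<in> I - A" and i_min: "s i = Min (s ` (I - A))"
    by auto
  have "{l\<in>I. s l < s i} \<subseteq> A"
  proof safe
    fix l assume "l \<in> I" "s l < s i"
    then show "l \<in> A"
      using fin i_min Min_le[of "s ` (I - A)" "s l"] by fastforce
  qed
  then have "card {l\<in>I. s l < s i} \<le> card A"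
    using fin AI by (intro card_mono) (auto intro: finite_subset)
  then have "i \<in> A"
    using cA i unfolding A_def by auto
  then show False
    using i by simp
qed

(* At z = E^{n+1}_j, mu_z and sigma_z are the mean and the deviation (normalised by n, not n+1)
   of the whole augmented sample, which makes the oracle score symmetric in E^1, ..., E^{n+1}. *)
definition mu_aug :: "nat \<Rightarrow> (nat \<Rightarrow> real^'d) \<Rightarrow> 'd \<Rightarrow> real" where
  "mu_aug n e j = (\<Sum>i=1..n+1. e i $ j) / real (n + 1)"

definition sigma_aug :: "nat \<Rightarrow> (nat \<Rightarrow> real^'d) \<Rightarrow> 'd \<Rightarrow> real" where
  "sigma_aug n e j = sqrt ((\<Sum>i=1..n+1. (e i $ j - mu_aug n e j)\<^sup>2) / real n)"

lemma S_oracle_eq_aug: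
  "S_oracle n e t = Max (range (\<lambda>j. (t $ j - mu_aug n e j) / sigma_aug n e j))"
proof -
  have mu: "mu_z n e j (e (n+1) $ j) = mu_aug n e j" for j
    by (simp add: mu_z_def mu_aug_def)
  have sigma: "sigma_z n e j (e (n+1) $ j) = sigma_aug n e j" for j
    unfolding sigma_z_def sigma_aug_def mu by simp
  show ?thesis
    unfolding S_oracle_def mu sigma ..
qed

definition oracle_score :: "nat \<Rightarrow> (nat \<Rightarrow> real^'d) \<Rightarrow> nat \<Rightarrow> real" where
  "oracle_score n e i = S_oracle n e (e i)"

lemma oracle_score_permute:
  assumes "\<tau> permutes {1..n+1}"
  shows "oracle_score n (e \<circ> \<tau>) i = oracle_score n e (\<tau> i)"
proof -
  have sum: "(\<Sum>i=1..n+1. f (\<tau> i)) = (\<Sum>i=1..n+1. f i)" for f :: "nat \<Rightarrow> real"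
    using sum.permute[OF assms, of f] by (simp add: o_def)
  have mu: "mu_aug n (e \<circ> \<tau>) j = mu_aug n e j" for j
    by (simp only: mu_aug_def o_def sum[of "\<lambda>i. e i $ j"])
  have "sigma_aug n (e \<circ> \<tau>) j = sigma_aug n e j" for j
    unfolding sigma_aug_def mu by (simp only: o_def sum[of "\<lambda>i. (e i $ j - mu_aug n e j)\<^sup>2"])
  with mu have "mu_aug n (e \<circ> \<tau>) = mu_aug n e" "sigma_aug n (e \<circ> \<tau>) = sigma_aug n e"
    by auto
  then show ?thesis
    by (simp add: oracle_score_def S_oracle_eq_aug)
qed

lemma oracle_score_cong:
  assumes "\<And>l. l \<in> {1..n+1} \<Longrightarrow> e l = e' l" "i \<in> {1..n+1}"
  shows "oracle_score n e i = oracle_score n e' i"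
proof -
  have "mu_aug n e = mu_aug n e'"
    using assms(1) by (intro ext) (simp add: mu_aug_def)
  moreover have "sigma_aug n e = sigma_aug n e'"
    using assms(1) by (intro ext) (simp add: sigma_aug_def \<open>mu_aug n e = mu_aug n e'\<close>)
  ultimately show ?thesis
    using assms by (simp add: oracle_score_def S_oracle_eq_aug)
qed

lemma measurable_oracle_score:
  assumes "i \<in> {1..n+1}"
  shows "(\<lambda>e. oracle_score n e i) \<in> borel_measurable (PiM {1..n+1} (\<lambda>_. borel :: (real^'d) measure))"
proof -
  have coord: "(\<lambda>e. e l $ j) \<in> borel_measurable (PiM {1..n+1} (\<lambda>_. borel :: (real^'d) measure))"
    if "l \<in> {1..n+1}" for l j
    using measurable_compose[OF measurable_component_singleton[OF that]
        borel_measurable_nth[of j]] by simp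
  have "(\<lambda>e. mu_aug n e j) \<in> borel_measurable (PiM {1..n+1} (\<lambda>_. borel :: (real^'d) measure))" for j
    unfolding mu_aug_def using coord by measurable
  moreover have "(\<lambda>e. sigma_aug n e j) \<in> borel_measurable (PiM {1..n+1} (\<lambda>_. borel :: (real^'d) measure))" for j
    unfolding sigma_aug_def using coord calculation by measurable
  ultimately show ?thesis
    unfolding oracle_score_def S_oracle_eq_aug
    by (intro borel_measurable_Max) (use coord[OF assms] in measurable)
qed

lemma S_oracle_le_Phi_gwc:
  assumes "\<forall>j. 0 \<le> e (n+1) $ j"
  shows "ereal (S_oracle n e t) \<le> Phi_gwc n e t"
proof -
  define f where "f j = (t $ j - mu_z n e j (e (n+1) $ j)) / sigma_z n e j (e (n+1) $ j)" for j
  have "Max (range f) \<in> range f"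
    by (intro Max_in) auto
  then obtain j where "Max (range f) = f j"
    by blast
  then have "ereal (S_oracle n e t) = ereal (f j)"
    by (simp add: S_oracle_def f_def)
  also have "ereal (f j) \<le> (SUP z\<in>{0..}. ereal ((t $ j - mu_z n e j z) / sigma_z n e j z))"
    unfolding f_def using assms by (intro SUP_upper) auto
  also have "\<dots> \<le> Phi_gwc n e t"
    unfolding Phi_gwc_def by (intro SUP_upper) auto
  finally show ?thesis .
qed

lemma oracle_score_le_quantiles:
  assumes k: "nat \<lceil>(1 - \<alpha>) * real (n + 1)\<rceil> = k" "1 \<le> k" "k \<le> n + 1"
    and nonneg: "\<forall>j. 0 \<le> e (n+1) $ j"
    and rank: "card {i\<in>{1..n+1}. oracle_score n e i < oracle_score n e (n+1)} < k"
  shows "ereal (oracle_score n e (n+1)) \<le> Q_oracle \<alpha> n e"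
    and "ereal (oracle_score n e (n+1)) \<le> Q_gwc \<alpha> n e"
proof -
  define s where "s = oracle_score n e (n+1)"
  have "card {i\<in>{1..n}. oracle_score n e i < s} \<le> card {i\<in>{1..n+1}. oracle_score n e i < s}"
    by (intro card_mono) auto
  with rank have few: "card {i\<in>{1..n}. oracle_score n e i < s} < k"
    by (simp add: s_def)
  then show "ereal s \<le> Q_oracle \<alpha> n e"
    unfolding Q_oracle_def by (intro le_Qhat_of_card_less[OF k]) (simp add: oracle_score_def)
  have "{i\<in>{1..n}. Phi_gwc n e (e i) < ereal s} \<subseteq> {i\<in>{1..n}. oracle_score n e i < s}"
  proof safe
    fix i assume "Phi_gwc n e (e i) < ereal s"
    then have "ereal (oracle_score n e i) < ereal s"
      unfolding oracle_score_def by (rule le_less_trans[OF S_oracle_le_Phi_gwc[where e = e and n = n, OF nonneg]])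
    then show "oracle_score n e i < s"
      by simp
  qed
  then have "card {i\<in>{1..n}. Phi_gwc n e (e i) < ereal s} \<le> card {i\<in>{1..n}. oracle_score n e i < s}"
    by (intro card_mono) auto
  with few show "ereal s \<le> Q_gwc \<alpha> n e"
    unfolding Q_gwc_def by (intro le_Qhat_of_card_less[OF k]) simp
qed

lemma test_residual_le_omega:
  assumes n: "n \<ge> 1" and sigma: "\<forall>j. sigma_hat n e j > 0"
    and score: "ereal (oracle_score n e (n+1)) \<le> q"
  shows "ereal (e (n+1) $ j) \<le> omega n e j q"
proof (rule le_omega_of_score_le[OF n sigma[rule_format]])
  have "(e (n+1) $ j - mu_z n e j (e (n+1) $ j)) / sigma_z n e j (e (n+1) $ j)
      \<le> oracle_score n e (n+1)"
    by (simp add: oracle_score_def S_oracle_def)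
  then show "ereal ((e (n+1) $ j - mu_z n e j (e (n+1) $ j)) / sigma_z n e j (e (n+1) $ j)) \<le> q"
    using score by (meson ereal_less_eq(3) order_trans)
qed

section \<open>Exchangeability and ranks\<close>

lemma card_permutes_Collect:
  assumes "\<tau> permutes S"
  shows "card {l\<in>S. P (\<tau> l)} = card {l\<in>S. P l}"
proof -
  have "{l\<in>S. P (\<tau> l)} = \<tau> -` {l\<in>S. P l}"
    using permutes_vimage[OF assms] by auto
  also have "card \<dots> = card {l\<in>S. P l}"
    using permutes_inj[OF assms] permutes_surj[OF assms] by (intro card_vimage_inj) auto
  finally show ?thesis .
qed

lemma (in prob_space) sum_prob_ge_of_card_ge:
  assumes "finite I" and A: "\<And>i. i \<in> I \<Longrightarrow> A i \<in> events"
    and cover: "\<And>\<omega>. \<omega> \<in> space M \<Longrightarrow> k \<le> card {i\<in>I. \<omega> \<in> A i}"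
  shows "real k \<le> (\<Sum>i\<in>I. prob (A i))"
proof -
  have int: "integrable M (indicator (A i) :: 'a \<Rightarrow> real)" if "i \<in> I" for i
    using A[OF that] by (intro integrable_real_indicator) (auto simp: less_top[symmetric])
  have "real k \<le> (\<integral>\<omega>. (\<Sum>i\<in>I. indicator (A i) \<omega>) \<partial>M)"
  proof (rule integral_ge_const)
    show "integrable M (\<lambda>\<omega>. \<Sum>i\<in>I. indicator (A i) \<omega> :: real)"
      using int by auto
    have "(\<Sum>i\<in>I. indicator (A i) \<omega> :: real) = real (card {i\<in>I. \<omega> \<in> A i})" for \<omega>
      using \<open>finite I\<close> by (simp add: indicator_def sum.If_cases Int_def conj_commute)
    then show "AE \<omega> in M. real k \<le> (\<Sum>i\<in>I. indicator (A i) \<omega>)"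
      using cover by simp
  qed
  also have "\<dots> = (\<Sum>i\<in>I. prob (A i))"
    using int A by (simp add: Bochner_Integration.integral_sum)
  finally show ?thesis .
qed

lemma sets_card_less_rank:
  fixes s :: "'a \<Rightarrow> 'i \<Rightarrow> real"
  assumes I: "finite I" and s: "\<And>l. l \<in> I \<Longrightarrow> (\<lambda>e. s e l) \<in> borel_measurable N" and i: "i \<in> I"
  shows "{e\<in>space N. card {l\<in>I. s e l < s e i} < k} \<in> sets N"
proof -
  have sum_meas: "(\<lambda>e. \<Sum>l\<in>I. if s e l < s e i then 1 else 0 :: real) \<in> borel_measurable N"
  proof (rule borel_measurable_sum)
    fix l assume "l \<in> I"
    then have "Measurable.pred N (\<lambda>e. s e l < s e i)"
      using s[OF \<open>l \<in> I\<close>] s[OF i] by measurable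
    then show "(\<lambda>e. if s e l < s e i then 1 else 0 :: real) \<in> borel_measurable N"
      by measurable
  qed
  have "real (card {l\<in>I. s e l < s e i}) = (\<Sum>l\<in>I. if s e l < s e i then 1 else 0)" for e
    unfolding real_of_card using I by (rule sum.inter_filter)
  then have "{e\<in>space N. card {l\<in>I. s e l < s e i} < k}
      = {e\<in>space N. (\<Sum>l\<in>I. if s e l < s e i then 1 else 0 :: real) < real k}"
    unfolding of_nat_less_iff[symmetric, where 'a = real] by (simp only:)
  also have "\<dots> \<in> sets N"
    using sum_meas by measurable
  finally show ?thesis .
qed

lemma sets_Collect_coordinates:
  fixes V :: "'i \<Rightarrow> 'w \<Rightarrow> 'v::topological_space"
  assumes V: "\<And>l. l \<in> I \<Longrightarrow> V l \<in> borel_measurable M"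
    and P: "{e\<in>space (PiM I (\<lambda>_. borel)). P e} \<in> sets (PiM I (\<lambda>_. borel))"
    and P_restrict: "\<And>e. P (restrict e I) = P e"
  shows "{\<omega>\<in>space M. P (\<lambda>l. V l \<omega>)} \<in> sets M"
proof -
  have "{\<omega>\<in>space M. P (\<lambda>l. V l \<omega>)}
      = (\<lambda>\<omega>. \<lambda>l\<in>I. V l \<omega>) -` {e\<in>space (PiM I (\<lambda>_. borel)). P e} \<inter> space M"
    using P_restrict[of "\<lambda>l. V l _"] by (auto simp: space_PiM)
  also have "\<dots> \<in> sets M"
    using V P by (intro measurable_sets[OF measurable_restrict]) auto
  finally show ?thesis .
qed

lemma exchangeable_event_measure_eq:
  fixes m :: nat and V :: "nat \<Rightarrow> 'w \<Rightarrow> 'v::topological_space" and H :: "nat \<Rightarrow> (nat \<Rightarrow> 'v) \<Rightarrow> bool"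
  defines "N \<equiv> PiM {1..m} (\<lambda>_. borel :: 'v measure)"
  assumes exch: "exchangeable M m V"
    and V: "\<And>l. l \<in> {1..m} \<Longrightarrow> V l \<in> borel_measurable M"
    and H_sets: "\<And>i. i \<in> {1..m} \<Longrightarrow> {e\<in>space N. H i e} \<in> sets N"
    and H_restrict: "\<And>i e. i \<in> {1..m} \<Longrightarrow> H i (restrict e {1..m}) = H i e"
    and H_perm: "\<And>\<tau> i e. \<tau> permutes {1..m} \<Longrightarrow> i \<in> {1..m} \<Longrightarrow> H i (e \<circ> \<tau>) = H (\<tau> i) e"
    and i: "i \<in> {1..m}" and i': "i' \<in> {1..m}"
  shows "measure M {\<omega>\<in>space M. H i (\<lambda>l. V l \<omega>)} = measure M {\<omega>\<in>space M. H i' (\<lambda>l. V l \<omega>)}"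
proof -
  define F where "F \<pi> = (\<lambda>\<omega>. \<lambda>l\<in>{1..m}. V (\<pi> l) \<omega>)" for \<pi> :: "nat \<Rightarrow> nat"
  define \<tau> where "\<tau> = Transposition.transpose i i'"
  have \<tau>: "\<tau> permutes {1..m}"
    unfolding \<tau>_def using i i' by (rule permutes_swap_id)
  have restrict: "H i (F \<pi> \<omega>) = H i (\<lambda>l. V (\<pi> l) \<omega>)" for \<pi> \<omega>
    unfolding F_def by (rule H_restrict[OF i])
  have "F \<pi> \<omega> \<in> space N" for \<pi> \<omega>
    by (simp add: F_def N_def space_PiM)
  then have event: "F \<pi> -` {e\<in>space N. H i e} \<inter> space M = {\<omega>\<in>space M. H i (\<lambda>l. V (\<pi> l) \<omega>)}" for \<pi>
    by (auto simp: restrict)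
  have F_meas: "F \<pi> \<in> measurable M N" if "\<pi> permutes {1..m}" for \<pi>
    unfolding F_def N_def using V permutes_in_image[OF that] by (intro measurable_restrict) auto
  have "measure M {\<omega>\<in>space M. H i (\<lambda>l. V l \<omega>)} = measure (distr M N (F id)) {e\<in>space N. H i e}"
    using event[of id] by (simp add: measure_distr[OF F_meas[OF permutes_id] H_sets[OF i]])
  also have "distr M N (F id) = distr M N (F \<tau>)"
    using exch \<tau> by (simp add: exchangeable_def F_def N_def)
  also have "measure (distr M N (F \<tau>)) {e\<in>space N. H i e} = measure M {\<omega>\<in>space M. H i (\<lambda>l. V (\<tau> l) \<omega>)}"
    using event[of \<tau>] by (simp add: measure_distr[OF F_meas[OF \<tau>] H_sets[OF i]])
  also have "{\<omega>\<in>space M. H i (\<lambda>l. V (\<tau> l) \<omega>)} = {\<omega>\<in>space M. H i' (\<lambda>l. V l \<omega>)}"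
    using H_perm[OF \<tau> i, of "\<lambda>l. V l _"] by (simp add: \<tau>_def o_def)
  finally show ?thesis .
qed

lemma exchangeable_rank_measure_ge:
  fixes m k :: nat and V :: "nat \<Rightarrow> 'w \<Rightarrow> 'v::topological_space"
    and s :: "(nat \<Rightarrow> 'v) \<Rightarrow> nat \<Rightarrow> real"
  assumes "prob_space M" and exch: "exchangeable M m V"
    and V: "\<And>l. l \<in> {1..m} \<Longrightarrow> V l \<in> borel_measurable M"
    and s_meas: "\<And>l. l \<in> {1..m} \<Longrightarrow> (\<lambda>e. s e l) \<in> borel_measurable (PiM {1..m} (\<lambda>_. borel))"
    and s_restrict: "\<And>e l. l \<in> {1..m} \<Longrightarrow> s (restrict e {1..m}) l = s e l"
    and s_perm: "\<And>\<tau> e l. \<tau> permutes {1..m} \<Longrightarrow> s (e \<circ> \<tau>) l = s e (\<tau> l)"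
    and k: "k \<le> m"
  shows "real k \<le> real m *
    measure M {\<omega>\<in>space M. card {l\<in>{1..m}. s (\<lambda>i. V i \<omega>) l < s (\<lambda>i. V i \<omega>) m} < k}"
proof -
  interpret prob_space M by fact
  define I where "I = {1..m}"
  define H where "H i e \<longleftrightarrow> card {l\<in>I. s e l < s e i} < k" for i e
  define A where "A i = {\<omega>\<in>space M. H i (\<lambda>l. V l \<omega>)}" for i
  have H_sets: "{e\<in>space (PiM I (\<lambda>_. borel)). H i e} \<in> sets (PiM I (\<lambda>_. borel))" if "i \<in> I" for i
    unfolding H_def I_def
    by (rule sets_card_less_rank[OF finite_atLeastAtMost[of 1 m] s_meas that[unfolded I_def]])
  have H_restrict: "H i (restrict e I) = H i e" if "i \<in> I" for i e
  proof -
    have "{l\<in>I. s (restrict e I) l < s (restrict e I) i} = {l\<in>I. s e l < s e i}"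
      using s_restrict that unfolding I_def by auto
    then show ?thesis
      by (simp add: H_def)
  qed
  have H_perm: "H i (e \<circ> \<tau>) = H (\<tau> i) e" if "\<tau> permutes I" for \<tau> i e
    using card_permutes_Collect[OF that, of "\<lambda>l. s e l < s e (\<tau> i)"] s_perm that
    by (simp add: H_def I_def)
  have "real k \<le> (\<Sum>i\<in>I. prob (A i))"
  proof (rule sum_prob_ge_of_card_ge)
    fix \<omega> assume "\<omega> \<in> space M"
    then have "{i\<in>I. \<omega> \<in> A i} = {i\<in>I. card {l\<in>I. s (\<lambda>l. V l \<omega>) l < s (\<lambda>l. V l \<omega>) i} < k}"
      by (simp add: A_def H_def)
    then show "k \<le> card {i\<in>I. \<omega> \<in> A i}"
      using card_rank_less_ge[of I k "s (\<lambda>l. V l \<omega>)"] k by (simp add: I_def)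
  next
    show "A i \<in> events" if "i \<in> I" for i
      unfolding A_def using V[folded I_def] H_sets[OF that] H_restrict[OF that]
      by (rule sets_Collect_coordinates)
  qed (unfold I_def, rule finite_atLeastAtMost)
  also have "\<dots> = (\<Sum>i\<in>I. prob (A m))"
  proof (rule sum.cong)
    fix i assume "i \<in> I"
    then show "prob (A i) = prob (A m)"
      unfolding A_def I_def
      by (intro exchangeable_event_measure_eq[OF exch V H_sets[unfolded I_def]
          H_restrict[unfolded I_def] H_perm[unfolded I_def]]) auto
  qed simp
  finally show ?thesis
    by (simp add: A_def H_def I_def)
qed

section \<open>Coverage\<close>

lemma sigma_hat_pos:
  assumes n: "n \<ge> 2" and distinct: "e 1 $ j \<noteq> e 2 $ j"
  shows "sigma_hat n e j > 0"
proof -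
  define f where "f i = (e i $ j - mu_hat n e j)\<^sup>2" for i
  have "e 1 $ j - mu_hat n e j \<noteq> 0 \<or> e 2 $ j - mu_hat n e j \<noteq> 0"
    using distinct by auto
  then have "0 < f 1 + f 2"
    unfolding f_def by (simp add: sum_power2_gt_zero_iff)
  also have "f 1 + f 2 = sum f {1, 2}"
    by simp
  also have "\<dots> \<le> sum f {1..n}"
    using n by (intro sum_mono2) (auto simp: f_def)
  finally show ?thesis
    using n by (simp add: sigma_hat_def f_def)
qed

lemma quantile_index_bounds:
  fixes n :: nat
  assumes "0 < \<alpha>" "\<alpha> < 1"
  defines "k \<equiv> nat \<lceil>(1 - \<alpha>) * real (n + 1)\<rceil>"
  shows "1 \<le> k" "k \<le> n + 1" "1 - \<alpha> \<le> real k / real (n + 1)"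
proof -
  have k_ge: "(1 - \<alpha>) * real (n + 1) \<le> real k"
    unfolding k_def by (rule real_nat_ceiling_ge)
  then show "1 - \<alpha> \<le> real k / real (n + 1)"
    by (simp add: le_divide_eq)
  have "0 < (1 - \<alpha>) * real (n + 1)"
    using assms(2) by simp
  with k_ge show "1 \<le> k"
    by linarith
  have "(1 - \<alpha>) * real (n + 1) \<le> real (n + 1)"
    using assms(1) by (simp add: mult_le_cancel_right1)
  then have "\<lceil>(1 - \<alpha>) * real (n + 1)\<rceil> \<le> int (n + 1)"
    by (metis ceiling_le of_int_of_nat_eq)
  then show "k \<le> n + 1"
    unfolding k_def using assms(1) by simp
qed

lemma rank_event_measure_ge:
  assumes "prob_space M" and "0 < \<alpha>" "\<alpha> < 1"
    and meas: "\<And>i. i \<in> {1..n+1} \<Longrightarrow> V i \<in> borel_measurable M"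
    and exch: "exchangeable M (n+1) V"
  defines "k \<equiv> nat \<lceil>(1 - \<alpha>) * real (n + 1)\<rceil>"
  shows "1 - \<alpha> \<le> measure M {\<omega>\<in>space M.
    card {i\<in>{1..n+1}. oracle_score n (\<lambda>l. V l \<omega>) i < oracle_score n (\<lambda>l. V l \<omega>) (n+1)} < k}"
    (is "_ \<le> measure M ?A")
proof -
  have "real k \<le> real (n + 1) * measure M ?A"
  proof (rule exchangeable_rank_measure_ge[OF assms(1) exch meas])
    show "(\<lambda>e. oracle_score n e l) \<in> borel_measurable (PiM {1..n+1} (\<lambda>_. borel))"
      if "l \<in> {1..n+1}" for l
      using that by (rule measurable_oracle_score)
    show "oracle_score n (restrict e {1..n+1}) l = oracle_score n e l" if "l \<in> {1..n+1}" for e l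
      using that by (intro oracle_score_cong) auto
    show "oracle_score n (e \<circ> \<tau>) l = oracle_score n e (\<tau> l)" if "\<tau> permutes {1..n+1}" for \<tau> e l
      using that by (rule oracle_score_permute)
    show "k \<le> n + 1"
      using quantile_index_bounds[OF assms(2,3)] by (simp add: k_def)
  qed simp
  then have "real k / real (n + 1) \<le> measure M ?A"
    by (simp add: pos_divide_le_eq mult.commute)
  with quantile_index_bounds(3)[OF assms(2,3), of n] show ?thesis
    unfolding k_def by (rule order_trans)
qed

lemma AE_assumption_A:
  assumes n: "n \<ge> 2" and A: "assumption_A M n V"
  shows "AE \<omega> in M. (\<forall>j. 0 \<le> V (n+1) \<omega> $ j) \<and> (\<forall>j. sigma_hat n (\<lambda>i. V i \<omega>) j > 0)"
proof -
  have nonneg: "AE \<omega> in M. \<forall>j. 0 \<le> V (n+1) \<omega> $ j"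
    using A unfolding assumption_A_def by (subst AE_all_countable) auto
  have "AE \<omega> in M. \<forall>j. V 1 \<omega> $ j \<noteq> V 2 \<omega> $ j"
  proof (subst AE_all_countable, intro allI)
    fix j
    have "AE \<omega> in M. \<forall>i\<in>{1..n+1}. \<forall>l\<in>{1..n+1}. i \<noteq> l \<longrightarrow> V i \<omega> $ j \<noteq> V l \<omega> $ j"
      using A unfolding assumption_A_def by blast
    then show "AE \<omega> in M. V 1 \<omega> $ j \<noteq> V 2 \<omega> $ j"
      by eventually_elim (use n in auto)
  qed
  then have "AE \<omega> in M. \<forall>j. sigma_hat n (\<lambda>i. V i \<omega>) j > 0"
    by eventually_elim (auto intro: sigma_hat_pos[OF n])
  with nonneg show ?thesis
    by eventually_elim simp
qed

lemma AE_rank_event_imp_coverage: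
  assumes n: "n \<ge> 2" and \<alpha>: "0 < \<alpha>" "\<alpha> < 1" and A: "assumption_A M n (resid E X Y)"
  defines "k \<equiv> nat \<lceil>(1 - \<alpha>) * real (n + 1)\<rceil>"
  shows "AE \<omega> in M.
    card {i\<in>{1..n+1}. oracle_score n (\<lambda>l. resid E X Y l \<omega>) i
                      < oracle_score n (\<lambda>l. resid E X Y l \<omega>) (n+1)} < k
    \<longrightarrow> Y (n+1) \<omega> \<in> C_tilde \<alpha> n E X Y \<omega> \<inter> C_gwc \<alpha> n E X Y \<omega>"
proof -
  have k: "nat \<lceil>(1 - \<alpha>) * real (n + 1)\<rceil> = k" "1 \<le> k" "k \<le> n + 1"
    using quantile_index_bounds[OF \<alpha>, of n] by (simp_all add: k_def)
  show ?thesis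
    using AE_assumption_A[OF n A]
  proof eventually_elim
    case (elim \<omega>)
    define e where "e = (\<lambda>i. resid E X Y i \<omega>)"
    have nonneg_e: "\<forall>j. 0 \<le> e (n+1) $ j" and sigma_e: "\<forall>j. sigma_hat n e j > 0"
      using elim by (simp_all add: e_def)
    have region: "Y (n+1) \<omega> \<in> region E (X (n+1) \<omega>) n e q"
      if "ereal (oracle_score n e (n+1)) \<le> q" for q
      using nonneg_e test_residual_le_omega[OF _ sigma_e that] n
      by (simp add: region_def e_def resid_def)
    show ?case
    proof
      assume "card {i\<in>{1..n+1}. oracle_score n (\<lambda>l. resid E X Y l \<omega>) i
          < oracle_score n (\<lambda>l. resid E X Y l \<omega>) (n+1)} < k"
      then have "card {i\<in>{1..n+1}. oracle_score n e i < oracle_score n e (n+1)} < k"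
        by (simp add: e_def)
      with oracle_score_le_quantiles[where e = e, OF k nonneg_e]
      show "Y (n+1) \<omega> \<in> C_tilde \<alpha> n E X Y \<omega> \<inter> C_gwc \<alpha> n E X Y \<omega>"
        using region by (simp add: C_tilde_def C_gwc_def e_def[symmetric])
    qed
  qed
qed

lemma oracle_coverage_event:
  assumes "prob_space M" "n \<ge> 2" "0 < \<alpha>" "\<alpha> < 1"
    and "\<And>i. i \<in> {1..n+1} \<Longrightarrow> resid E X Y i \<in> borel_measurable M"
    and "exchangeable M (n+1) (resid E X Y)"
    and "assumption_A M n (resid E X Y)"
  obtains A where "1 - \<alpha> \<le> measure M A"
    and "AE \<omega> in M. \<omega> \<in> A \<longrightarrow> Y (n+1) \<omega> \<in> C_tilde \<alpha> n E X Y \<omega> \<inter> C_gwc \<alpha> n E X Y \<omega>"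
proof -
  let ?A = "{\<omega>\<in>space M. card {i\<in>{1..n+1}. oracle_score n (\<lambda>l. resid E X Y l \<omega>) i
      < oracle_score n (\<lambda>l. resid E X Y l \<omega>) (n+1)} < nat \<lceil>(1 - \<alpha>) * real (n + 1)\<rceil>}"
  have "AE \<omega> in M. \<omega> \<in> ?A \<longrightarrow> Y (n+1) \<omega> \<in> C_tilde \<alpha> n E X Y \<omega> \<inter> C_gwc \<alpha> n E X Y \<omega>"
    using AE_rank_event_imp_coverage[OF assms(2,3,4,7)] by eventually_elim auto
  with rank_event_measure_ge[OF assms(1,3,4,5,6)] show thesis
    by (rule that)
qed

theorem proposition3p5:
  fixes M :: "'w measure" and n :: nat and \<alpha> :: real
    and X :: "nat \<Rightarrow> 'w \<Rightarrow> 'x" and Y :: "nat \<Rightarrow> 'w \<Rightarrow> real^'d"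
    and E :: "'x \<Rightarrow> real^'d \<Rightarrow> real^'d"
    and Part :: "'w \<Rightarrow> (real^'d) set set"
    and Clwc_R :: "'w \<Rightarrow> (real^'d) set \<Rightarrow> (real^'d) set"
  assumes "prob_space M"
    and "n \<ge> 2" and "0 < \<alpha>" and "\<alpha> < 1"
    and "\<And>i. i \<in> {1..n+1} \<Longrightarrow> resid E X Y i \<in> borel_measurable M"
    and "exchangeable M (n+1) (resid E X Y)"
    and "assumption_A M n (resid E X Y)"
    and "AE \<omega> in M. disjoint (Part \<omega>)"
    and "AE \<omega> in M. \<Union>(Part \<omega>) = C_gwc \<alpha> n E X Y \<omega>"
    and "AE \<omega> in M. \<forall>R\<in>Part \<omega>. Clwc_R \<omega> R \<subseteq> R"
    and "AE \<omega> in M. \<forall>R\<in>Part \<omega>. Y (n+1) \<omega> \<in> R \<longrightarrow> C_tilde \<alpha> n E X Y \<omega> \<inter> R \<subseteq> Clwc_R \<omega> R"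
    and "{\<omega>\<in>space M. Y (n+1) \<omega> \<in> \<Union>(Clwc_R \<omega> ` Part \<omega>)} \<in> sets M"
  shows "(AE \<omega> in M. \<Union>(Clwc_R \<omega> ` Part \<omega>) \<subseteq> C_gwc \<alpha> n E X Y \<omega>)
    \<and> measure M {\<omega>\<in>space M. Y (n+1) \<omega> \<in> \<Union>(Clwc_R \<omega> ` Part \<omega>)} \<ge> 1 - \<alpha>
    \<and> (\<forall>Clwc :: 'w \<Rightarrow> (real^'d) set.
         (AE \<omega> in M. \<Union>(Clwc_R \<omega> ` Part \<omega>) \<subseteq> Clwc \<omega> \<and> Clwc \<omega> \<subseteq> C_gwc \<alpha> n E X Y \<omega>)
         \<longrightarrow> {\<omega>\<in>space M. Y (n+1) \<omega> \<in> Clwc \<omega>} \<in> sets M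
         \<longrightarrow> measure M {\<omega>\<in>space M. Y (n+1) \<omega> \<in> Clwc \<omega>} \<ge> 1 - \<alpha>)"
proof -
  interpret prob_space M by fact
  obtain A where A: "1 - \<alpha> \<le> measure M A"
    and covered: "AE \<omega> in M. \<omega> \<in> A \<longrightarrow> Y (n+1) \<omega> \<in> C_tilde \<alpha> n E X Y \<omega> \<inter> C_gwc \<alpha> n E X Y \<omega>"
    using oracle_coverage_event[OF assms(1-7)] .
  define U where "U \<omega> = \<Union>(Clwc_R \<omega> ` Part \<omega>)" for \<omega>
  have U_sub: "AE \<omega> in M. U \<omega> \<subseteq> C_gwc \<alpha> n E X Y \<omega>"
    using assms(9,10) unfolding U_def by eventually_elim blast
  have "AE \<omega> in M. \<omega> \<in> A \<longrightarrow> \<omega> \<in> {\<omega>\<in>space M. Y (n+1) \<omega> \<in> U \<omega>}"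
    using AE_space covered assms(9,11) unfolding U_def by eventually_elim blast
  with A have U_cov: "1 - \<alpha> \<le> measure M {\<omega>\<in>space M. Y (n+1) \<omega> \<in> U \<omega>}"
    using finite_measure_mono_AE assms(12) unfolding U_def by (meson order_trans)
  have "1 - \<alpha> \<le> measure M {\<omega>\<in>space M. Y (n+1) \<omega> \<in> C \<omega>}"
    if "AE \<omega> in M. U \<omega> \<subseteq> C \<omega> \<and> C \<omega> \<subseteq> C_gwc \<alpha> n E X Y \<omega>"
      and "{\<omega>\<in>space M. Y (n+1) \<omega> \<in> C \<omega>} \<in> sets M" for C
  proof -
    have "AE \<omega> in M. \<omega> \<in> {\<omega>\<in>space M. Y (n+1) \<omega> \<in> U \<omega>} \<longrightarrow> \<omega> \<in> {\<omega>\<in>space M. Y (n+1) \<omega> \<in> C \<omega>}"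
      using that(1) by eventually_elim auto
    with U_cov show ?thesis
      using finite_measure_mono_AE that(2) by (meson order_trans)
  qed
  with U_sub U_cov show ?thesis
    unfolding U_def by blast
qed

end
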